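(* Consider the randomized mechanism which, given a profile $\mathbf x\in[0,1]^n$ with $n_1=|\{i:x_i\in[0,\tfrac12]\}|$ and $n_2=|\{i:x_i\in(\tfrac12,1]\}|$, outputs $y=0$ with probability $\frac{n_2^2}{n_1^2+n_2^2}$ and $y=1$ with probability $\frac{n_1^2}{n_1^2+n_2^2}$. This mechanism is a $2$-approximation for the $L_p$ social cost both for $p=1$ and for $p=+\infty$.
   Context: Agent $i$ at $x_i\in[0,1]$ incurs cost $c(x_i,y)=1-|x_i-y|$ from a facility at $y\in[0,1]$. $\mathrm{sc}_1(y,\mathbf x)=\sum_ic(x_i,y)$ and $\mathrm{sc}_\infty(y,\mathbf x)=\max_ic(x_i,y)$. A randomized mechanism $f$ is an $\alpha$-approximation if $\mathbb E_{y\sim f(\mathbf x)}[\mathrm{sc}_p(y,\mathbf x)]\le\alpha\min_{z\in[0,1]}\mathrm{sc}_p(z,\mathbf x)$ for every profile $\mathbf x$. *)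

theory Defs
  imports "HOL-Probability.Probability"
begin

definition cost :: "real \<Rightarrow> real \<Rightarrow> real" where
  "cost xi y = 1 - \<bar>xi - y\<bar>"

definition sc1 :: "nat \<Rightarrow> (nat \<Rightarrow> real) \<Rightarrow> real \<Rightarrow> real" where
  "sc1 n x y = (\<Sum>i<n. cost (x i) y)"

definition scinf :: "nat \<Rightarrow> (nat \<Rightarrow> real) \<Rightarrow> real \<Rightarrow> real" where
  "scinf n x y = Max ((\<lambda>i. cost (x i) y) ` {..<n})"

definition valid_profile :: "nat \<Rightarrow> (nat \<Rightarrow> real) \<Rightarrow> bool" where
  "valid_profile n x \<longleftrightarrow> n \<ge> 1 \<and> (\<forall>i<n. x i \<in> {0..1})"

definition is_approx ::
  "(nat \<Rightarrow> (nat \<Rightarrow> real) \<Rightarrow> real \<Rightarrow> real) \<Rightarrow> real \<Rightarrow>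
   (nat \<Rightarrow> (nat \<Rightarrow> real) \<Rightarrow> real pmf) \<Rightarrow> bool" where
  "is_approx sc \<alpha> f \<longleftrightarrow>
     (\<forall>n x. valid_profile n x \<longrightarrow>
        measure_pmf.expectation (f n x) (sc n x) \<le> \<alpha> * (INF z\<in>{0..1}. sc n x z))"

definition cnt1 :: "nat \<Rightarrow> (nat \<Rightarrow> real) \<Rightarrow> nat" where
  "cnt1 n x = card {i. i < n \<and> x i \<in> {0..1/2}}"

definition cnt2 :: "nat \<Rightarrow> (nat \<Rightarrow> real) \<Rightarrow> nat" where
  "cnt2 n x = card {i. i < n \<and> x i \<in> {1/2<..1}}"

definition mech :: "nat \<Rightarrow> (nat \<Rightarrow> real) \<Rightarrow> real pmf" where
  "mech n x = map_pmf (\<lambda>b. if b then 1 else 0)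
     (bernoulli_pmf (real (cnt1 n x)^2 / (real (cnt1 n x)^2 + real (cnt2 n x)^2)))"

end

theory Submission
  imports Defs
begin

text \<open>
  With p and q agents in the left and right half, the mechanism mixes the point
  masses at 1 and 0 with weights proportional to p^2 and q^2.
  For the sum of costs, concavity of the cost in the facility location shows that
  the optimum is attained at an endpoint, so it suffices to compare the expected
  cost with 2 sc(1) and 2 sc(0); this reduces to (p - q)^2 \<ge> 0, because every
  agent in the right half contributes at least 1/2 to sc(1), and symmetrically.
  For the maximum cost, if both halves are occupied then every location costs at
  least 1/2 while the expected cost is at most 1; otherwise the mechanism
  deterministically picks the endpoint farthest from all agents, which is optimal.
\<close>

lemma expectation_mech:
  assumes "cnt1 n x + cnt2 n x > 0"
  shows "measure_pmf.expectation (mech n x) f =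
    (real (cnt1 n x)^2 * f 1 + real (cnt2 n x)^2 * f 0) /
    (real (cnt1 n x)^2 + real (cnt2 n x)^2)"
proof -
  let ?p = "real (cnt1 n x)" and ?q = "real (cnt2 n x)"
  have pos: "?p^2 + ?q^2 > 0"
    using assms by (auto simp: add_pos_nonneg add_nonneg_pos)
  let ?a = "?p^2 / (?p^2 + ?q^2)"
  have "?a \<le> 1"
    using pos by simp
  then have "measure_pmf.expectation (mech n x) f = ?a * f 1 + (1 - ?a) * f 0"
    unfolding mech_def by (simp add: integral_map_pmf algebra_simps)
  moreover have "?a + ?q^2 / (?p^2 + ?q^2) = 1"
    using assms by (subst add_divide_distrib[symmetric]) auto
  then have "1 - ?a = ?q^2 / (?p^2 + ?q^2)"
    by linarith
  ultimately show ?thesis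
    by (simp add: add_divide_distrib)
qed

lemma cnt1_add_cnt2:
  assumes "\<forall>i<n. x i \<in> {0..1}"
  shows "cnt1 n x + cnt2 n x = n"
proof -
  have "{i. i < n \<and> x i \<in> {0..1/2}} \<union> {i. i < n \<and> x i \<in> {1/2<..1}} = {..<n}"
    using assms by force
  moreover have "{i. i < n \<and> x i \<in> {0..1/2}} \<inter> {i. i < n \<and> x i \<in> {1/2<..1}} = {}"
    by auto
  ultimately show ?thesis
    unfolding cnt1_def cnt2_def
    by (metis card_Un_disjoint card_lessThan finite_Collect_conjI finite_lessThan lessThan_def)
qed

lemma card_le_twice_sum:
  fixes f :: "'a \<Rightarrow> real"
  assumes "finite A" "B \<subseteq> A" "\<forall>i\<in>A. 0 \<le> f i" "\<forall>i\<in>B. 1/2 \<le> f i"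
  shows "real (card B) \<le> 2 * sum f A"
proof -
  have "real (card B) = 2 * (\<Sum>i\<in>B. 1/2)"
    by simp
  also have "\<dots> \<le> 2 * sum f B"
    using assms(4) sum_mono[of B "\<lambda>_. 1/2" f] by simp
  also have "\<dots> \<le> 2 * sum f A"
    using assms by (intro mult_left_mono sum_mono2) auto
  finally show ?thesis .
qed

lemma square_weighted_mean_le_twice:
  fixes p q S T :: real
  assumes "q \<ge> 0" "p^2 + q^2 > 0" "S + T = p + q" "q \<le> 2 * S"
  shows "(p^2 * S + q^2 * T) / (p^2 + q^2) \<le> 2 * S"
proof -
  have "q * (p^2 + 3 * q^2) / 2 - q^2 * (p + q) = q * (p - q)^2 / 2"
    by (simp add: power2_eq_square algebra_simps)
  then have "q^2 * (p + q) \<le> q * (p^2 + 3 * q^2) / 2"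
    using mult_nonneg_nonneg[OF \<open>q \<ge> 0\<close> zero_le_power2[of "p - q"]] by simp
  also have "\<dots> \<le> S * (p^2 + 3 * q^2)"
    using mult_right_mono[of q "2 * S" "p^2 + 3 * q^2"] \<open>q \<le> 2 * S\<close> by simp
  finally have "q^2 * (p + q) \<le> S * (p^2 + 3 * q^2)" .
  moreover have "T = p + q - S"
    using \<open>S + T = p + q\<close> by simp
  ultimately have "p^2 * S + q^2 * T \<le> 2 * S * (p^2 + q^2)"
    by (simp only:) (simp add: algebra_simps)
  then show ?thesis
    using \<open>p^2 + q^2 > 0\<close> by (simp add: divide_le_eq)
qed

lemma le_twice_INF:
  fixes e :: real
  assumes "A \<noteq> {}" "\<And>z. z \<in> A \<Longrightarrow> e \<le> 2 * f z"
  shows "e \<le> 2 * (INF z\<in>A. f z)"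
proof -
  have "e / 2 \<le> (INF z\<in>A. f z)"
    using assms by (intro cINF_greatest) force+
  then show ?thesis
    by simp
qed

lemma cost_ge_interpolation:
  assumes "xi \<in> {0..1}" "z \<in> {0..1}"
  shows "(1 - z) * cost xi 0 + z * cost xi 1 \<le> cost xi z"
proof -
  have "z * xi \<le> z" "z * xi \<le> xi"
    using assms by (auto simp: mult_left_le mult_left_le_one_le)
  moreover have "(1 - z) * cost xi 0 + z * cost xi 1 = 1 - xi - z + 2 * (z * xi)"
    using assms unfolding cost_def by (simp add: algebra_simps)
  ultimately show ?thesis
    unfolding cost_def by (simp add: abs_if)
qed

lemma sc1_ge_interpolation:
  assumes "\<forall>i<n. x i \<in> {0..1}" "z \<in> {0..1}"
  shows "(1 - z) * sc1 n x 0 + z * sc1 n x 1 \<le> sc1 n x z"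
  unfolding sc1_def sum_distrib_left sum.distrib[symmetric]
  using assms by (intro sum_mono cost_ge_interpolation) auto

lemma sc1_one: "\<forall>i<n. x i \<le> 1 \<Longrightarrow> sc1 n x 1 = (\<Sum>i<n. x i)"
  unfolding sc1_def cost_def by (intro sum.cong) auto

lemma sc1_zero: "\<forall>i<n. 0 \<le> x i \<Longrightarrow> sc1 n x 0 = (\<Sum>i<n. 1 - x i)"
  unfolding sc1_def cost_def by (intro sum.cong) auto

lemma sc1_mech_le:
  assumes "valid_profile n x"
  shows "measure_pmf.expectation (mech n x) (sc1 n x) \<le> 2 * (INF z\<in>{0..1}. sc1 n x z)"
proof -
  let ?p = "real (cnt1 n x)" and ?q = "real (cnt2 n x)"
  let ?S = "sc1 n x 1" and ?T = "sc1 n x 0"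
  let ?E = "measure_pmf.expectation (mech n x) (sc1 n x)"
  have x01: "\<forall>i<n. x i \<in> {0..1}" and "n \<ge> 1"
    using assms by (auto simp: valid_profile_def)
  then have n_eq: "cnt1 n x + cnt2 n x = n"
    by (simp add: cnt1_add_cnt2)
  then have pos: "?p^2 + ?q^2 > 0"
    using \<open>n \<ge> 1\<close> by (auto simp: sum_power2_gt_zero_iff)
  have S: "?S = (\<Sum>i<n. x i)"
    using x01 by (intro sc1_one) auto
  have T: "?T = (\<Sum>i<n. 1 - x i)"
    using x01 by (intro sc1_zero) auto
  have "?S + ?T = real n"
    unfolding S T by (simp flip: sum.distrib)
  then have ST: "?S + ?T = ?p + ?q"
    using n_eq by (metis of_nat_add)
  have "?q \<le> 2 * ?S"
    unfolding S cnt2_def using x01 by (intro card_le_twice_sum) auto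
  have "?p \<le> 2 * ?T"
    unfolding T cnt1_def using x01 by (intro card_le_twice_sum) auto
  have E: "?E = (?p^2 * ?S + ?q^2 * ?T) / (?p^2 + ?q^2)"
    using n_eq \<open>n \<ge> 1\<close> by (intro expectation_mech) simp
  have "?E \<le> 2 * ?S"
    unfolding E using pos ST \<open>?q \<le> 2 * ?S\<close> by (intro square_weighted_mean_le_twice) auto
  moreover have "?E \<le> 2 * ?T"
  proof -
    have "?E = (?q^2 * ?T + ?p^2 * ?S) / (?q^2 + ?p^2)"
      unfolding E by (simp add: add.commute)
    also have "\<dots> \<le> 2 * ?T"
      using pos ST \<open>?p \<le> 2 * ?T\<close>
      by (intro square_weighted_mean_le_twice) (simp_all add: add.commute)
    finally show ?thesis .
  qed
  ultimately show ?thesis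
  proof (intro le_twice_INF)
    fix z :: real assume "z \<in> {0..1}"
    assume "?E \<le> 2 * ?S" "?E \<le> 2 * ?T"
    then have "?E \<le> 2 * ((1 - z) * ?T + z * ?S)"
      using \<open>z \<in> {0..1}\<close> mult_left_mono[of ?E "2 * ?T" "1 - z"]
        mult_left_mono[of ?E "2 * ?S" z]
      by (auto simp: algebra_simps)
    also have "\<dots> \<le> 2 * sc1 n x z"
      using sc1_ge_interpolation[OF x01 \<open>z \<in> {0..1}\<close>] by simp
    finally show "?E \<le> 2 * sc1 n x z" .
  qed simp
qed

lemma cost_nonneg: "xi \<in> {0..1} \<Longrightarrow> z \<in> {0..1} \<Longrightarrow> 0 \<le> cost xi z"
  unfolding cost_def by auto

lemma cost_one_le: "xi \<le> 1/2 \<Longrightarrow> z \<in> {0..1} \<Longrightarrow> cost xi 1 \<le> cost xi z"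
  unfolding cost_def by auto

lemma cost_zero_le: "1/2 \<le> xi \<Longrightarrow> z \<in> {0..1} \<Longrightarrow> cost xi 0 \<le> cost xi z"
  unfolding cost_def by auto

lemma cost_le_scinf: "i < n \<Longrightarrow> cost (x i) z \<le> scinf n x z"
  unfolding scinf_def by (rule Max_ge) auto

lemma scinf_le_one: "n \<ge> 1 \<Longrightarrow> scinf n x z \<le> 1"
  unfolding scinf_def by (subst Max_le_iff) (auto simp: cost_def lessThan_empty_iff)

lemma scinf_mono:
  assumes "n \<ge> 1" "\<forall>i<n. cost (x i) y \<le> cost (x i) z"
  shows "scinf n x y \<le> scinf n x z"
proof -
  have "\<forall>i<n. cost (x i) y \<le> scinf n x z"
    using assms(2) cost_le_scinf order_trans by blast
  then show ?thesis
    unfolding scinf_def[of n x y] using assms(1)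
    by (subst Max_le_iff) (auto simp: lessThan_empty_iff)
qed

lemma scinf_ge_half:
  assumes "i < n" "x i \<le> 1/2" "j < n" "1/2 < x j" "\<forall>i<n. x i \<in> {0..1}" "z \<in> {0..1}"
  shows "1/2 \<le> scinf n x z"
proof (cases "z \<le> 1/2")
  case True
  with assms have "1/2 \<le> cost (x i) z"
    unfolding cost_def by (auto simp: abs_if)
  then show ?thesis
    using cost_le_scinf[OF \<open>i < n\<close>] by (rule order_trans)
next
  case False
  with assms have "1/2 \<le> cost (x j) z"
    unfolding cost_def by (auto simp: abs_if)
  then show ?thesis
    using cost_le_scinf[OF \<open>j < n\<close>] by (rule order_trans)
qed

lemma scinf_mech_le:
  assumes "valid_profile n x"
  shows "measure_pmf.expectation (mech n x) (scinf n x) \<le> 2 * (INF z\<in>{0..1}. scinf n x z)"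
proof (intro le_twice_INF)
  let ?p = "real (cnt1 n x)" and ?q = "real (cnt2 n x)"
  let ?E = "measure_pmf.expectation (mech n x) (scinf n x)"
  fix z :: real assume "z \<in> {0..1}"
  have x01: "\<forall>i<n. x i \<in> {0..1}" and "n \<ge> 1"
    using assms by (auto simp: valid_profile_def)
  then have n_eq: "cnt1 n x + cnt2 n x = n"
    by (simp add: cnt1_add_cnt2)
  then have pos: "?p^2 + ?q^2 > 0"
    using \<open>n \<ge> 1\<close> by (auto simp: sum_power2_gt_zero_iff)
  have E: "?E = (?p^2 * scinf n x 1 + ?q^2 * scinf n x 0) / (?p^2 + ?q^2)"
    using n_eq \<open>n \<ge> 1\<close> by (intro expectation_mech) simp
  have "0 \<le> scinf n x z"
    using cost_le_scinf[of 0 n x z] cost_nonneg[of "x 0" z] x01 \<open>n \<ge> 1\<close> \<open>z \<in> {0..1}\<close> by force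
  consider (both) i j where "i < n" "x i \<le> 1/2" "j < n" "1/2 < x j"
    | (left) "\<forall>i<n. x i \<le> 1/2" | (right) "\<forall>i<n. 1/2 < x i"
    by (meson not_le)
  then show "?E \<le> 2 * scinf n x z"
  proof cases
    case both
    have "?p^2 * scinf n x 1 + ?q^2 * scinf n x 0 \<le> ?p^2 * 1 + ?q^2 * 1"
      using scinf_le_one[OF \<open>n \<ge> 1\<close>] by (intro add_mono mult_left_mono) auto
    then have "?E \<le> 1"
      unfolding E using pos by simp
    moreover have "1/2 \<le> scinf n x z"
      using both x01 \<open>z \<in> {0..1}\<close> by (rule scinf_ge_half)
    ultimately show ?thesis
      by simp
  next
    case left
    then have "cnt2 n x = 0"
      unfolding cnt2_def by auto
    then have "?E = scinf n x 1"
      unfolding E using n_eq \<open>n \<ge> 1\<close> by simp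
    also have "\<dots> \<le> scinf n x z"
      using left \<open>n \<ge> 1\<close> \<open>z \<in> {0..1}\<close> by (intro scinf_mono allI impI cost_one_le) auto
    finally show ?thesis
      using \<open>0 \<le> scinf n x z\<close> by simp
  next
    case right
    then have "cnt1 n x = 0"
      unfolding cnt1_def by auto
    then have "?E = scinf n x 0"
      unfolding E using n_eq \<open>n \<ge> 1\<close> by simp
    also have "\<dots> \<le> scinf n x z"
      using right \<open>n \<ge> 1\<close> \<open>z \<in> {0..1}\<close>
    by (intro scinf_mono allI impI cost_zero_le) (auto simp: less_imp_le)
    finally show ?thesis
      using \<open>0 \<le> scinf n x z\<close> by simp
  qed
qed simp

theorem theorem12:
  shows "is_approx sc1 2 mech \<and> is_approx scinf 2 mech"
  unfolding is_approx_def using sc1_mech_le scinf_mech_le by blast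

end
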